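(* Let $f:\mathcal S\times\mathcal W\to\mathbb R$, $\Delta:\mathcal S\times\mathcal W\to\mathbb R^+$, $\hat{\mathcal W}$ an arbitrary set, $g:\mathcal S\times\hat{\mathcal W}\to\mathbb R$, $\epsilon\in\mathbb R$ and $\delta>0$. Then $$\log\mathbb P\big(f(S,W)>\Delta(S,W)\big)\le\max\Big(\log\delta,\ \sup_{\nu_{S,W}\in\mathcal F^\delta_{S,W}}\ \inf_{p_{\hat W|S}\in\mathcal Q(\nu_{S,W})}\ \inf_{\lambda\ge0}\Big\{-D_{KL}(\nu_{S,W}\|P_{S,W})-\lambda\Big(\mathbb E_{\nu_{S,W}}[\Delta(S,W)]-\epsilon-\mathbb E_{\nu_Sp_{\hat W|S}}[g(S,\hat W)]\Big)\Big\}\Big),$$ where the probability is over $(S,W)\sim P_{S,W}$, $\mathcal F^\delta_{S,W}:=\mathcal G^\delta_{S,W}\cap\mathcal S_{S,W}(f-\Delta)$, and $\mathcal Q(\nu_{S,W})$ is the set of conditionals $p_{\hat W|S}$ with $\mathbb E_{\nu_{S,W}p_{\hat W|S}}[\Delta(S,W)-g(S,\hat W)]\le\epsilon$.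
   Context: Setup: $S\sim P_S$ on $\mathcal S=\mathcal Z^n$, algorithm inducing $P_{W|S}$, $P_{S,W}$ on $\mathcal S\times\mathcal W$. Natural logs. $D_{KL}(Q\|P)=\mathbb E_Q[\log dQ/dP]$ if $Q\ll P$, else $\infty$. For a random variable $X$ with law $P_X$ and $h:\mathcal X\to\mathbb R$: $\mathcal G^\delta_X=\{\nu_X: D_{KL}(\nu_X\|P_X)\le\log(1/\delta)\}$, $\mathcal S_X(h)=\{\nu_X: h(x)>0\ \forall x\in\mathrm{supp}\,\nu_X\}$. $\nu_S$ is the $S$-marginal of $\nu_{S,W}$; an infimum over an empty set is $+\infty$. *)

theory Defs
  imports "HOL-Probability.Probability"
begin

definition elog :: "real \<Rightarrow> ereal" where
  "elog x = (if x \<le> 0 then -\<infinity> else ereal (ln x))"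

definition KL :: "'a measure \<Rightarrow> 'a measure \<Rightarrow> ereal" where
  "KL N M = (if absolutely_continuous M N then
      enn2ereal (\<integral>\<^sup>+ x. ennreal (max 0 (ln (enn2real (RN_deriv M N x)))) \<partial>N)
    - enn2ereal (\<integral>\<^sup>+ x. ennreal (max 0 (- ln (enn2real (RN_deriv M N x)))) \<partial>N)
   else \<infinity>)"

definition Gset :: "real \<Rightarrow> 'a measure \<Rightarrow> 'a measure set" where
  "Gset \<delta> P = {\<nu>. prob_space \<nu> \<and> sets \<nu> = sets P \<and> KL \<nu> P \<le> ereal (ln (1 / \<delta>))}"

text \<open>S_X(h): distributions nu_X with h > 0 on the support of nu_X
  (read as: h > 0 nu_X-almost everywhere).\<close>
definition Sset :: "'a measure \<Rightarrow> ('a \<Rightarrow> real) \<Rightarrow> 'a measure set" where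
  "Sset P h = {\<nu>. prob_space \<nu> \<and> sets \<nu> = sets P \<and> (AE x in \<nu>. h x > 0)}"

definition Fset :: "real \<Rightarrow> 'a measure \<Rightarrow> ('a \<Rightarrow> real) \<Rightarrow> ('a \<Rightarrow> real) \<Rightarrow> 'a measure set" where
  "Fset \<delta> P f \<Delta> = Gset \<delta> P \<inter> Sset P (\<lambda>x. f x - \<Delta> x)"

definition margS :: "'s measure \<Rightarrow> ('s \<times> 'w) measure \<Rightarrow> 's measure" where
  "margS XS \<nu> = distr \<nu> XS fst"

text \<open>Joint law nu_S p_{What|S} of (S, What).\<close>
definition jointS :: "'s measure \<Rightarrow> 'v measure \<Rightarrow> ('s \<times> 'w) measure \<Rightarrow> ('s \<Rightarrow> 'v measure)
    \<Rightarrow> ('s \<times> 'v) measure" where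
  "jointS XS XV \<nu> p = margS XS \<nu> \<bind> (\<lambda>s. distr (p s) (XS \<Otimes>\<^sub>M XV) (Pair s))"

text \<open>Joint law nu_{S,W} p_{What|S} of ((S, W), What).\<close>
definition jointSW :: "'v measure \<Rightarrow> ('s \<times> 'w) measure \<Rightarrow> ('s \<Rightarrow> 'v measure)
    \<Rightarrow> (('s \<times> 'w) \<times> 'v) measure" where
  "jointSW XV \<nu> p = \<nu> \<bind> (\<lambda>x. distr (p (fst x)) (\<nu> \<Otimes>\<^sub>M XV) (Pair x))"

text \<open>Q(nu_{S,W}): Markov kernels p_{What|S} (S -> probability measures on What) for which
  the expectations appearing in the statement exist (are finite) and
  E_{nu p}[Delta(S,W) - g(S,What)] <= epsilon.\<close>
definition Qset :: "'s measure \<Rightarrow> 'v measure \<Rightarrow> ('s \<times> 'w \<Rightarrow> real) \<Rightarrow> ('s \<times> 'v \<Rightarrow> real)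
    \<Rightarrow> real \<Rightarrow> ('s \<times> 'w) measure \<Rightarrow> ('s \<Rightarrow> 'v measure) set" where
  "Qset XS XV \<Delta> g \<epsilon> \<nu> = {p \<in> measurable XS (prob_algebra XV).
      integrable \<nu> \<Delta> \<and> integrable (jointS XS XV \<nu> p) g \<and>
      integrable (jointSW XV \<nu> p) (\<lambda>(x, v). \<Delta> x - g (fst x, v)) \<and>
      (\<integral>(x, v). \<Delta> x - g (fst x, v) \<partial>jointSW XV \<nu> p) \<le> \<epsilon>}"

end

theory Submission imports Defs begin

text \<open>Conditioning P on the event A = {f > \<Delta>} gives a law \<nu> with D(\<nu> || P) = log (1 / P(A))
  that is supported where f - \<Delta> > 0, so \<nu> lies in F(\<delta>) as soon as P(A) > \<delta>. For any kernel p,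
  the expectation of \<Delta>(S,W) - g(S,W') under \<nu> p splits as E[\<Delta>] under \<nu> minus E[g] under \<nu>_S p;
  hence the constraint defining Q makes the \<lambda>-term nonnegative, and every inner objective is at
  least -D(\<nu> || P) = log P(A).\<close>

lemma measurable_Pair_const_sets:
  assumes "sets M = sets Y" and "x \<in> space X"
  shows "Pair x \<in> measurable M (X \<Otimes>\<^sub>M Y)"
  unfolding measurable_cong_sets[OF assms(1) refl] by (rule measurable_Pair1'[OF assms(2)])

context
  fixes XS :: "'s measure" and XW :: "'w measure" and XV :: "'v measure"
    and \<nu> :: "('s \<times> 'w) measure" and p :: "'s \<Rightarrow> 'v measure"
  assumes prob_\<nu>: "prob_space \<nu>"
    and sets_\<nu>: "sets \<nu> = sets (XS \<Otimes>\<^sub>M XW)"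
    and p_kernel: "p \<in> measurable XS (prob_algebra XV)"
begin

private lemma fst_measurable: "fst \<in> measurable \<nu> XS"
  using measurable_cong_sets[OF sets_\<nu> refl] by auto

private lemma space_\<nu>_nonempty: "space \<nu> \<noteq> {}"
  using prob_\<nu> prob_space.not_empty by blast

private lemma kernel_at:
  assumes "x \<in> space \<nu>"
  shows "prob_space (p (fst x))" "sets (p (fst x)) = sets XV"
  using measurable_space[OF p_kernel] measurable_space[OF fst_measurable assms]
  by (auto simp: space_prob_algebra)

private lemma jointSW_kernel_measurable:
  "(\<lambda>x. distr (p (fst x)) (\<nu> \<Otimes>\<^sub>M XV) (Pair x)) \<in> measurable \<nu> (subprob_algebra (\<nu> \<Otimes>\<^sub>M XV))"
  by (rule measurable_distr2[where M=XV])
    (auto intro: measurable_compose[OF fst_measurable measurable_prob_algebraD[OF p_kernel]])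

private lemma jointS_kernel_measurable:
  "(\<lambda>s. distr (p s) (XS \<Otimes>\<^sub>M XV) (Pair s)) \<in> measurable XS (subprob_algebra (XS \<Otimes>\<^sub>M XV))"
  by (rule measurable_distr2[where M=XV]) (auto intro: measurable_prob_algebraD[OF p_kernel])

lemma sets_jointSW: "sets (jointSW XV \<nu> p) = sets (\<nu> \<Otimes>\<^sub>M XV)"
  unfolding jointSW_def by (rule sets_bind_measurable[OF jointSW_kernel_measurable space_\<nu>_nonempty])

lemma sets_jointS: "sets (jointS XS XV \<nu> p) = sets (XS \<Otimes>\<^sub>M XV)"
proof -
  have "space (distr \<nu> XS fst) \<noteq> {}"
    using space_\<nu>_nonempty measurable_space[OF fst_measurable] by auto
  then show ?thesis
    unfolding jointS_def margS_def
    using jointS_kernel_measurable by (intro sets_bind_measurable) simp_all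
qed

lemma distr_jointSW_fst: "distr (jointSW XV \<nu> p) \<nu> fst = \<nu>"
proof -
  have "distr (jointSW XV \<nu> p) \<nu> fst = \<nu> \<bind> (\<lambda>x. distr (distr (p (fst x)) (\<nu> \<Otimes>\<^sub>M XV) (Pair x)) \<nu> fst)"
    unfolding jointSW_def by (rule distr_bind[OF jointSW_kernel_measurable space_\<nu>_nonempty]) simp
  also have "\<dots> = \<nu> \<bind> return \<nu>"
  proof (rule bind_cong[OF refl])
    fix x assume x: "x \<in> space \<nu>"
    interpret prob_space "p (fst x)" using kernel_at[OF x] by simp
    have "distr (distr (p (fst x)) (\<nu> \<Otimes>\<^sub>M XV) (Pair x)) \<nu> fst = distr (p (fst x)) \<nu> (\<lambda>_. x)"
      by (subst distr_distr[OF measurable_fst measurable_Pair_const_sets[OF kernel_at(2)[OF x] x]])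
        (simp add: comp_def)
    also have "\<dots> = return \<nu> x" by (rule distr_const[OF x])
    finally show "distr (distr (p (fst x)) (\<nu> \<Otimes>\<^sub>M XV) (Pair x)) \<nu> fst = return \<nu> x" .
  qed
  also have "\<dots> = \<nu>" by (rule bind_return'') simp
  finally show ?thesis .
qed

lemma distr_jointSW_forget_W:
  "distr (jointSW XV \<nu> p) (XS \<Otimes>\<^sub>M XV) (\<lambda>(x, v). (fst x, v)) = jointS XS XV \<nu> p"
proof -
  let ?h = "\<lambda>(x::'s \<times> 'w, v::'v). (fst x, v)"
  have h: "?h \<in> measurable (\<nu> \<Otimes>\<^sub>M XV) (XS \<Otimes>\<^sub>M XV)"
    using fst_measurable by measurable
  have "distr (jointSW XV \<nu> p) (XS \<Otimes>\<^sub>M XV) ?h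
      = \<nu> \<bind> (\<lambda>x. distr (distr (p (fst x)) (\<nu> \<Otimes>\<^sub>M XV) (Pair x)) (XS \<Otimes>\<^sub>M XV) ?h)"
    unfolding jointSW_def by (rule distr_bind[OF jointSW_kernel_measurable space_\<nu>_nonempty h])
  also have "\<dots> = \<nu> \<bind> (\<lambda>x. distr (p (fst x)) (XS \<Otimes>\<^sub>M XV) (Pair (fst x)))"
  proof (rule bind_cong[OF refl])
    fix x assume x: "x \<in> space \<nu>"
    show "distr (distr (p (fst x)) (\<nu> \<Otimes>\<^sub>M XV) (Pair x)) (XS \<Otimes>\<^sub>M XV) ?h
        = distr (p (fst x)) (XS \<Otimes>\<^sub>M XV) (Pair (fst x))"
      by (subst distr_distr[OF h measurable_Pair_const_sets[OF kernel_at(2)[OF x] x]])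
        (simp add: comp_def)
  qed
  also have "\<dots> = jointS XS XV \<nu> p"
    unfolding jointS_def margS_def
    by (rule bind_distr[OF fst_measurable jointS_kernel_measurable space_\<nu>_nonempty, symmetric])
  finally show ?thesis .
qed

lemma integral_jointSW_diff:
  fixes \<Delta> :: "'s \<times> 'w \<Rightarrow> real" and g :: "'s \<times> 'v \<Rightarrow> real"
  assumes int_\<Delta>: "integrable \<nu> \<Delta>" and int_g: "integrable (jointS XS XV \<nu> p) g"
  shows "(\<integral>(x, v). \<Delta> x - g (fst x, v) \<partial>jointSW XV \<nu> p)
       = (\<integral>x. \<Delta> x \<partial>\<nu>) - (\<integral>y. g y \<partial>jointS XS XV \<nu> p)"
proof -
  let ?h = "\<lambda>(x::'s \<times> 'w, v::'v). (fst x, v)"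
  have \<Delta>_meas: "\<Delta> \<in> borel_measurable \<nu>" using int_\<Delta> by auto
  have g_meas: "g \<in> borel_measurable (XS \<Otimes>\<^sub>M XV)"
    using int_g measurable_cong_sets[OF sets_jointS refl] by auto
  have fst_meas: "fst \<in> measurable (jointSW XV \<nu> p) \<nu>"
    using measurable_cong_sets[OF sets_jointSW refl] by auto
  have h_meas: "?h \<in> measurable (jointSW XV \<nu> p) (XS \<Otimes>\<^sub>M XV)"
    unfolding measurable_cong_sets[OF sets_jointSW refl] using fst_measurable by measurable
  note fst_law = integrable_distr_eq[OF fst_meas \<Delta>_meas] integral_distr[OF fst_meas \<Delta>_meas]
  note h_law = integrable_distr_eq[OF h_meas g_meas] integral_distr[OF h_meas g_meas]
  have "(\<lambda>(x, v). \<Delta> x - g (fst x, v)) = (\<lambda>y. \<Delta> (fst y) - g (?h y))" by auto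
  then show ?thesis
    using fst_law h_law int_\<Delta> int_g
    by (simp add: distr_jointSW_fst distr_jointSW_forget_W)
qed

end

lemma Qset_expectation_gap_nonpos:
  assumes "prob_space \<nu>" "sets \<nu> = sets (XS \<Otimes>\<^sub>M XW)" "p \<in> Qset XS XV \<Delta> g \<epsilon> \<nu>"
  shows "(\<integral>x. \<Delta> x \<partial>\<nu>) - \<epsilon> - (\<integral>y. g y \<partial>jointS XS XV \<nu> p) \<le> 0"
  using assms(3) integral_jointSW_diff[OF assms(1,2), of p XV \<Delta> g] unfolding Qset_def by auto

lemma KL_uniform_measure:
  assumes "prob_space P" and A: "A \<in> sets P" and pos: "measure P A > 0"
  shows "KL (uniform_measure P A) P = ereal (ln (1 / measure P A))"
proof -
  interpret prob_space P by fact
  let ?\<nu> = "uniform_measure P A" and ?c = "1 / measure P A"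
  have emeasure_A: "emeasure P A = ennreal (measure P A)" by (simp add: emeasure_eq_measure)
  have dens_meas: "(\<lambda>x. indicator A x / emeasure P A) \<in> borel_measurable P" using A by measurable
  have ac: "absolutely_continuous P ?\<nu>"
    unfolding uniform_measure_def by (rule absolutely_continuousI_density[OF dens_meas])
  have "AE x in P. indicator A x / emeasure P A = RN_deriv P ?\<nu> x"
    by (rule RN_deriv_unique[OF dens_meas]) (simp add: uniform_measure_def)
  then have "AE x in P. x \<in> A \<longrightarrow> RN_deriv P ?\<nu> x = ennreal ?c"
    by eventually_elim (use pos divide_ennreal[of 1 "measure P A"] in \<open>auto simp: emeasure_A\<close>)
  then have RN: "AE x in ?\<nu>. enn2real (RN_deriv P ?\<nu> x) = ?c"
    by (rule AE_uniform_measureI[OF A, THEN eventually_mono]) (use pos in auto)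
  have ln_c: "0 \<le> ln ?c" using pos measure_le_1[of A] by simp
  have prob_\<nu>: "prob_space ?\<nu>"
    using pos by (intro prob_space_uniform_measure) (auto simp: emeasure_A)
  have pos_part: "(\<integral>\<^sup>+ x. ennreal (max 0 (ln (enn2real (RN_deriv P ?\<nu> x)))) \<partial>?\<nu>) = ennreal (ln ?c)"
    using RN ln_c prob_space.emeasure_space_1[OF prob_\<nu>]
    by (subst nn_integral_cong_AE[where v = "\<lambda>_. ennreal (ln ?c)"]) (auto elim!: eventually_mono)
  have neg_part: "(\<integral>\<^sup>+ x. ennreal (max 0 (- ln (enn2real (RN_deriv P ?\<nu> x)))) \<partial>?\<nu>) = 0"
    using RN ln_c
    by (subst nn_integral_cong_AE[where v = "\<lambda>_. 0"]) (auto simp: ennreal_neg elim!: eventually_mono)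
  show ?thesis
    unfolding KL_def using ac pos_part neg_part ln_c by (simp add: zero_ennreal.rep_eq)
qed

lemma uniform_measure_in_Fset:
  assumes "prob_space P" and A: "A = {x \<in> space P. f x > \<Delta> x}" "A \<in> sets P"
    and "0 < \<delta>" "\<delta> < measure P A"
  shows "uniform_measure P A \<in> Fset \<delta> P f \<Delta>"
proof -
  interpret prob_space P by fact
  have "emeasure P A \<noteq> 0" "emeasure P A \<noteq> \<infinity>"
    using assms by (auto simp: emeasure_eq_measure)
  then have "prob_space (uniform_measure P A)" by (rule prob_space_uniform_measure)
  moreover have "AE x in uniform_measure P A. f x - \<Delta> x > 0"
    by (rule AE_uniform_measureI[OF A(2)]) (simp add: A(1))
  moreover have "ln (1 / measure P A) \<le> ln (1 / \<delta>)"
    using assms(4,5) by (simp add: ln_div)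
  ultimately show ?thesis
    unfolding Fset_def Gset_def Sset_def
    using KL_uniform_measure[OF assms(1,3)] assms(4,5) by auto
qed

theorem lemma1:
  fixes XS :: "'s measure" and XW :: "'w measure" and XV :: "'v measure"
    and P :: "('s \<times> 'w) measure"
    and f \<Delta> :: "'s \<times> 'w \<Rightarrow> real" and g :: "'s \<times> 'v \<Rightarrow> real"
    and \<epsilon> \<delta> :: real
  assumes "prob_space P"
    and "sets P = sets (XS \<Otimes>\<^sub>M XW)"
    and "f \<in> borel_measurable (XS \<Otimes>\<^sub>M XW)"
    and "\<Delta> \<in> borel_measurable (XS \<Otimes>\<^sub>M XW)"
    and "\<forall>x \<in> space (XS \<Otimes>\<^sub>M XW). 0 \<le> \<Delta> x"
    and "\<delta> > 0"
  shows "elog (measure P {x \<in> space P. f x > \<Delta> x})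
     \<le> max (ereal (ln \<delta>))
          (SUP \<nu> \<in> Fset \<delta> P f \<Delta>. INF p \<in> Qset XS XV \<Delta> g \<epsilon> \<nu>. INF l \<in> {0::real..}.
              - KL \<nu> P - ereal l * ereal ((\<integral>x. \<Delta> x \<partial>\<nu>) - \<epsilon> - (\<integral>y. g y \<partial>jointS XS XV \<nu> p)))"
    (is "elog (measure P ?A) \<le> max _ (SUP \<nu> \<in> _. ?obj \<nu>)")
proof (cases "measure P ?A \<le> \<delta>")
  case True
  then show ?thesis using assms(6) by (auto simp: elog_def le_max_iff_disj)
next
  case False
  let ?\<nu> = "uniform_measure P ?A"
  have "f \<in> borel_measurable P" "\<Delta> \<in> borel_measurable P"
    using assms(3,4) measurable_cong_sets[OF assms(2) refl] by auto
  then have A_sets: "?A \<in> sets P" by measurable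
  have pos: "measure P ?A > 0" using False assms(6) by simp
  have F: "?\<nu> \<in> Fset \<delta> P f \<Delta>"
    using False assms(1,6) A_sets by (intro uniform_measure_in_Fset) auto
  have prob_\<nu>: "prob_space ?\<nu>" using F by (simp add: Fset_def Gset_def)
  have sets_\<nu>: "sets ?\<nu> = sets (XS \<Otimes>\<^sub>M XW)" using assms(2) by simp
  have "ereal (ln (measure P ?A)) \<le> ?obj ?\<nu>"
  proof (intro INF_greatest)
    fix p and l :: real assume p: "p \<in> Qset XS XV \<Delta> g \<epsilon> ?\<nu>" and l: "l \<in> {0..}"
    have "l * ((\<integral>x. \<Delta> x \<partial>?\<nu>) - \<epsilon> - (\<integral>y. g y \<partial>jointS XS XV ?\<nu> p)) \<le> 0"
      using Qset_expectation_gap_nonpos[OF prob_\<nu> sets_\<nu> p] l by (simp add: mult_nonneg_nonpos)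
    then show "ereal (ln (measure P ?A)) \<le> - KL ?\<nu> P - ereal l * ereal ((\<integral>x. \<Delta> x \<partial>?\<nu>) - \<epsilon> - (\<integral>y. g y \<partial>jointS XS XV ?\<nu> p))"
      using pos by (simp add: KL_uniform_measure[OF assms(1) A_sets pos] ln_div)
  qed
  also have "\<dots> \<le> (SUP \<nu> \<in> Fset \<delta> P f \<Delta>. ?obj \<nu>)" by (rule SUP_upper[OF F])
  finally show ?thesis using pos by (simp add: elog_def le_max_iff_disj)
qed

end
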